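(* Let $G=(V,E)$ be a finite connected multigraph, $\mathscr H_0$ a connected component of its exchange graph, and $G_0$ the spanning subgraph of $G$ associated to $\mathscr H_0$. If $X$ and $X'$ are two different saturated components of $G_0$, then $X\cap X'=\emptyset$.
   Context: A spanning tree of $G$ is a subgraph with vertex set $V$ that is a tree; a spanning 2-forest is a subgraph with vertex set $V$, without cycles, with exactly two connected components; $\mathcal{ST}(G)$, $\mathcal{SF}_2(G)$ denote the sets of these. For a spanning subgraph $G'$, $G'+e$ (resp. $G'-e$) is the spanning subgraph with edge set $E(G')\cup\{e\}$ (resp. $E(G')\setminus\{e\}$). The exchange graph $\mathscr H$ of $G$ has vertex set $\mathscr V_1\sqcup\mathscr V_2$, $\mathscr V_1=\{(F,T): F\in\mathcal{SF}_2(G),T\in\mathcal{ST}(G),E(F)\cap E(T)=\emptyset\}$, $\mathscr V_2=\{(T,F):T\in\mathcal{ST}(G),F\in\mathcal{SF}_2(G),E(F)\cap E(T)=\emptyset\}$, with $(F,T)\in\mathscr V_1$ adjacent to $(T',F')\in\mathscr V_2$ iff there is $e\in E(T)$ with $F'=T-e$ and $T'=F+e$. For a connected component $\mathscr H_0$, the edge set $E(A)\cup E(B)$ is independent of the vertex $(A,B)$ of $\mathscr H_0$, and $G_0$ is the spanning subgraph with this edge set. For $X\subseteq V$, $G_0[X]$ is the induced subgraph on $X$. $X$ is saturated with respect to $G_0$ if $G_0[X]$ has exactly $2|X|-2$ edges; a saturated component of $G_0$ is a subset of $V$ that is saturated with respect to $G_0$ and maximal for inclusion among such subsets. *)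

theory Defs
  imports Main
begin

text \<open>Spanning subgraphs are identified with their edge sets F \<subseteq> E.\<close>

definition multigraph :: "'v set \<Rightarrow> 'e set \<Rightarrow> ('e \<Rightarrow> 'v set) \<Rightarrow> bool" where
  "multigraph V E ends \<longleftrightarrow> finite V \<and> finite E \<and>
     (\<forall>e\<in>E. ends e \<subseteq> V \<and> 1 \<le> card (ends e) \<and> card (ends e) \<le> 2)"

definition adj :: "('e \<Rightarrow> 'v set) \<Rightarrow> 'e set \<Rightarrow> ('v \<times> 'v) set" where
  "adj ends F = {(u, v). \<exists>e\<in>F. ends e = {u, v}}"

definition connected_on :: "'v set \<Rightarrow> ('e \<Rightarrow> 'v set) \<Rightarrow> 'e set \<Rightarrow> bool" where
  "connected_on V ends F \<longleftrightarrow> V \<noteq> {} \<and> (\<forall>u\<in>V. \<forall>v\<in>V. (u, v) \<in> (adj ends F)\<^sup>*)"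

definition components :: "'v set \<Rightarrow> ('e \<Rightarrow> 'v set) \<Rightarrow> 'e set \<Rightarrow> 'v set set" where
  "components V ends F = {{v\<in>V. (u, v) \<in> (adj ends F)\<^sup>*} | u. u \<in> V}"

text \<open>A cycle: a closed walk v0 e1 v1 ... ek vk = v0 (k \<ge> 1) with distinct edges
and distinct vertices v0..v(k-1) (loops and pairs of parallel edges are cycles).\<close>
definition has_cycle :: "('e \<Rightarrow> 'v set) \<Rightarrow> 'e set \<Rightarrow> bool" where
  "has_cycle ends F \<longleftrightarrow> (\<exists>vs es. length es \<ge> 1 \<and> length vs = length es + 1 \<and>
      distinct es \<and> set es \<subseteq> F \<and> hd vs = last vs \<and> distinct (tl vs) \<and>
      (\<forall>i<length es. ends (es ! i) = {vs ! i, vs ! Suc i}))"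

definition spanning_trees :: "'v set \<Rightarrow> 'e set \<Rightarrow> ('e \<Rightarrow> 'v set) \<Rightarrow> 'e set set" where
  "spanning_trees V E ends =
     {T. T \<subseteq> E \<and> \<not> has_cycle ends T \<and> connected_on V ends T}"

definition spanning_2forests :: "'v set \<Rightarrow> 'e set \<Rightarrow> ('e \<Rightarrow> 'v set) \<Rightarrow> 'e set set" where
  "spanning_2forests V E ends =
     {F. F \<subseteq> E \<and> \<not> has_cycle ends F \<and> card (components V ends F) = 2}"

text \<open>Vertices of the exchange graph: Inl (F,T) \<in> V1, Inr (T,F) \<in> V2.\<close>
definition exch_verts :: "'v set \<Rightarrow> 'e set \<Rightarrow> ('e \<Rightarrow> 'v set) \<Rightarrow>
    (('e set \<times> 'e set) + ('e set \<times> 'e set)) set" where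
  "exch_verts V E ends =
     {Inl (F, T) | F T. F \<in> spanning_2forests V E ends \<and> T \<in> spanning_trees V E ends \<and> F \<inter> T = {}}
   \<union> {Inr (T, F) | T F. T \<in> spanning_trees V E ends \<and> F \<in> spanning_2forests V E ends \<and> F \<inter> T = {}}"

definition exch_edge1 :: "'e set \<times> 'e set \<Rightarrow> 'e set \<times> 'e set \<Rightarrow> bool" where
  "exch_edge1 FT TF' \<longleftrightarrow> (\<exists>e\<in>snd FT. snd TF' = snd FT - {e} \<and> fst TF' = fst FT \<union> {e})"

definition exch_adj :: "'v set \<Rightarrow> 'e set \<Rightarrow> ('e \<Rightarrow> 'v set) \<Rightarrow>
    ((('e set \<times> 'e set) + ('e set \<times> 'e set)) \<times> (('e set \<times> 'e set) + ('e set \<times> 'e set))) set" where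
  "exch_adj V E ends =
     {(Inl p, Inr q) | p q. Inl p \<in> exch_verts V E ends \<and> Inr q \<in> exch_verts V E ends \<and> exch_edge1 p q}
   \<union> {(Inr q, Inl p) | p q. Inl p \<in> exch_verts V E ends \<and> Inr q \<in> exch_verts V E ends \<and> exch_edge1 p q}"

definition exch_component :: "'v set \<Rightarrow> 'e set \<Rightarrow> ('e \<Rightarrow> 'v set) \<Rightarrow>
    (('e set \<times> 'e set) + ('e set \<times> 'e set)) set \<Rightarrow> bool" where
  "exch_component V E ends H0 \<longleftrightarrow> (\<exists>p\<in>exch_verts V E ends.
      H0 = {q \<in> exch_verts V E ends. (p, q) \<in> (exch_adj V E ends)\<^sup>*})"

definition pair_edges :: "('e set \<times> 'e set) + ('e set \<times> 'e set) \<Rightarrow> 'e set" where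
  "pair_edges x = (case x of Inl (A, B) \<Rightarrow> A \<union> B | Inr (A, B) \<Rightarrow> A \<union> B)"

definition induced_edges :: "('e \<Rightarrow> 'v set) \<Rightarrow> 'e set \<Rightarrow> 'v set \<Rightarrow> 'e set" where
  "induced_edges ends E0 X = {e\<in>E0. ends e \<subseteq> X}"

definition saturated :: "'v set \<Rightarrow> ('e \<Rightarrow> 'v set) \<Rightarrow> 'e set \<Rightarrow> 'v set \<Rightarrow> bool" where
  "saturated V ends E0 X \<longleftrightarrow> X \<subseteq> V \<and>
     int (card (induced_edges ends E0 X)) = 2 * int (card X) - 2"

definition saturated_component :: "'v set \<Rightarrow> ('e \<Rightarrow> 'v set) \<Rightarrow> 'e set \<Rightarrow> 'v set \<Rightarrow> bool" where
  "saturated_component V ends E0 X \<longleftrightarrow> saturated V ends E0 X \<and>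
     (\<forall>Y. saturated V ends E0 Y \<and> X \<subseteq> Y \<longrightarrow> Y = X)"

end

theory Submission imports Defs begin

text \<open>An acyclic edge set induces at most |Y| - 1 edges on a nonempty vertex set Y, so the
union E0 of the forest and the tree of an exchange-graph vertex induces at most 2|Y| - 2
edges on Y. Counting edges is supermodular: the edges induced on X \<union> X' include those
induced on X or on X', which overlap exactly in those induced on X \<inter> X'. Hence if X and X'
are saturated and X \<inter> X' is nonempty, the bound on X \<inter> X' forces X \<union> X' to be saturated,
and maximality gives X = X \<union> X' = X'.\<close>

lemma adj_rtrancl_mono: "F \<subseteq> F' \<Longrightarrow> (adj ends F)\<^sup>* \<subseteq> (adj ends F')\<^sup>*"
  by (rule rtrancl_mono) (auto simp: adj_def)

lemma has_cycle_mono: "has_cycle ends F \<Longrightarrow> F \<subseteq> F' \<Longrightarrow> has_cycle ends F'"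
  unfolding has_cycle_def by (meson order_trans)

definition walk :: "('e \<Rightarrow> 'v set) \<Rightarrow> 'e set \<Rightarrow> 'v list \<Rightarrow> 'e list \<Rightarrow> bool" where
  "walk ends F vs es \<longleftrightarrow> length vs = length es + 1 \<and> set es \<subseteq> F \<and>
     (\<forall>i<length es. ends (es ! i) = {vs ! i, vs ! Suc i})"

lemma walk_snoc:
  assumes "walk ends F vs es" "f \<in> F" "ends f = {last vs, z}"
  shows "walk ends F (vs @ [z]) (es @ [f])"
proof -
  have len: "length vs = Suc (length es)" using assms(1) unfolding walk_def by simp
  then have "vs ! length es = last vs" by (metis last_conv_nth list.size(3) nat.distinct(1) diff_Suc_1)
  then show ?thesis
    using assms len unfolding walk_def by (auto simp: nth_append less_Suc_eq)
qed

lemma walk_take: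
  assumes "walk ends F vs es"
  shows "walk ends F (take (Suc k) vs) (take k es)"
  using assms unfolding walk_def by (auto dest: in_set_takeD)

lemma adj_rtrancl_obtain_path:
  assumes "(a, b) \<in> (adj ends F)\<^sup>*"
  obtains vs es where "walk ends F vs es" "hd vs = a" "last vs = b" "distinct vs"
  using assms
proof (induction arbitrary: thesis rule: rtrancl_induct)
  case base
  show ?case by (rule base[of "[a]" "[]"]) (simp_all add: walk_def)
next
  case (step y z)
  obtain vs es where P: "walk ends F vs es" "hd vs = a" "last vs = y" "distinct vs"
    using step.IH by blast
  obtain f where f: "f \<in> F" "ends f = {y, z}" using step.hyps(2) unfolding adj_def by blast
  have "vs \<noteq> []" using P(1) unfolding walk_def by auto
  show ?case
  proof (cases "z \<in> set vs")
    case True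
    then obtain k where k: "k < length vs" "vs ! k = z" by (metis in_set_conv_nth)
    have "last (take (Suc k) vs) = z" using k by (simp add: take_Suc_conv_app_nth)
    then show ?thesis
      using step.prems[OF walk_take[OF P(1)]] P(2,4) \<open>vs \<noteq> []\<close> by simp
  next
    case False
    show ?thesis
      using step.prems[OF walk_snoc[OF P(1) f(1)]] f(2) P(2-4) False \<open>vs \<noteq> []\<close> by simp
  qed
qed

lemma walk_distinct_edges:
  assumes "walk ends F vs es" "distinct vs"
  shows "distinct es"
proof (subst distinct_conv_nth, intro allI impI)
  fix i j assume ij: "i < length es" "j < length es" "i \<noteq> j"
  show "es ! i \<noteq> es ! j"
  proof
    assume "es ! i = es ! j"
    then have "{vs ! i, vs ! Suc i} = {vs ! j, vs ! Suc j}"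
      using assms(1) ij unfolding walk_def by metis
    then have "vs ! i = vs ! j \<or> vs ! i = vs ! Suc j"
      by (auto simp: doubleton_eq_iff)
    moreover have "vs ! Suc i = vs ! j \<or> vs ! Suc i = vs ! Suc j"
      using \<open>{vs ! i, vs ! Suc i} = _\<close> by (auto simp: doubleton_eq_iff)
    ultimately show False
      using ij assms unfolding walk_def by (auto simp: nth_eq_iff_index_eq)
  qed
qed

lemma has_cycle_insert_if_adj_rtrancl:
  assumes "(a, b) \<in> (adj ends F)\<^sup>*" "e \<notin> F" "ends e = {a, b}"
  shows "has_cycle ends (insert e F)"
proof -
  obtain vs es where P: "walk ends F vs es" "hd vs = a" "last vs = b" "distinct vs"
    using adj_rtrancl_obtain_path[OF assms(1)] .
  have "vs \<noteq> []" using P(1) unfolding walk_def by auto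
  have W: "walk ends (insert e F) (vs @ [a]) (es @ [e])"
    using walk_snoc[of ends "insert e F" vs es e a] P(1,3) assms(3)
    by (auto simp: walk_def insert_commute)
  have "distinct (es @ [e])"
    using walk_distinct_edges[OF P(1,4)] P(1) assms(2) unfolding walk_def by auto
  moreover have "distinct (tl (vs @ [a]))"
    using P(2,4) \<open>vs \<noteq> []\<close> by (cases vs) auto
  ultimately show ?thesis
    using W P(2) \<open>vs \<noteq> []\<close> unfolding has_cycle_def walk_def
    by (intro exI[of _ "vs @ [a]"] exI[of _ "es @ [e]"]) auto
qed

lemma components_eq_image: "components X ends F = (\<lambda>u. {v\<in>X. (u, v) \<in> (adj ends F)\<^sup>*}) ` X"
  unfolding components_def by blast

lemma card_components_insert_less:
  assumes "finite X" "a \<in> X" "b \<in> X" "ends e = {a, b}" "(a, b) \<notin> (adj ends F)\<^sup>*"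
  shows "card (components X ends (insert e F)) < card (components X ends F)"
proof -
  define R where "R = (adj ends F)\<^sup>*"
  define R' where "R' = (adj ends (insert e F))\<^sup>*"
  define c where "c u = {v\<in>X. (u, v) \<in> R}" for u
  define c' where "c' u = {v\<in>X. (u, v) \<in> R'}" for u
  define merge where "merge C = {v\<in>X. \<exists>u\<in>C. (u, v) \<in> R'}" for C
  have "R \<subseteq> R'" unfolding R_def R'_def by (rule adj_rtrancl_mono) blast
  have merge_c: "merge (c u) = c' u" if "u \<in> X" for u
  proof
    show "merge (c u) \<subseteq> c' u"
      using \<open>R \<subseteq> R'\<close> unfolding merge_def c_def c'_def R'_def
      by (blast intro: rtrancl_trans)
    show "c' u \<subseteq> merge (c u)"
      using that unfolding merge_def c_def c'_def R_def by blast
  qed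
  have "c a \<noteq> c b"
    using assms(3,5) unfolding c_def R_def by blast
  moreover have "c' a = c' b"
  proof -
    have "(a, b) \<in> R'" "(b, a) \<in> R'"
      unfolding R'_def using assms(4) by (auto simp: adj_def intro!: r_into_rtrancl)
    then show ?thesis
      unfolding c'_def R'_def by (blast intro: rtrancl_trans)
  qed
  then have "merge (c a) = merge (c b)" using merge_c assms(2,3) by simp
  ultimately have "\<not> inj_on merge (c ` X)"
    using assms(2,3) unfolding inj_on_def by blast
  then have "card (merge ` c ` X) < card (c ` X)"
    using assms(1) by (meson card_image_le finite_imageI inj_on_iff_eq_card le_neq_implies_less)
  moreover have "merge ` c ` X = c' ` X"
    using merge_c by (simp add: image_image)
  ultimately show ?thesis
    unfolding components_eq_image c_def c'_def R_def R'_def by simp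
qed

lemma card_forest_add_card_components_le:
  assumes "finite X" "finite F" "\<forall>e\<in>F. \<exists>a\<in>X. \<exists>b\<in>X. ends e = {a, b}" "\<not> has_cycle ends F"
  shows "card F + card (components X ends F) \<le> card X"
  using assms(2-4)
proof (induction F rule: finite_induct)
  case empty
  show ?case unfolding components_eq_image using assms(1) by (simp add: card_image_le)
next
  case (insert e F)
  obtain a b where ab: "a \<in> X" "b \<in> X" "ends e = {a, b}" using insert.prems(1) by blast
  have "\<not> has_cycle ends F"
    using insert.prems(2) has_cycle_mono[of ends F "insert e F"] by blast
  then have IH: "card F + card (components X ends F) \<le> card X"
    using insert.IH insert.prems(1) by simp
  have "(a, b) \<notin> (adj ends F)\<^sup>*"
    using has_cycle_insert_if_adj_rtrancl[of a b ends F e] insert.hyps(2) ab(3) insert.prems(2)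
    by blast
  then show ?case
    using card_components_insert_less[of X a b ends e F] assms(1) ab IH insert.hyps by simp
qed

lemma card_forest_less_card:
  assumes "finite X" "X \<noteq> {}" "finite F" "\<forall>e\<in>F. \<exists>a\<in>X. \<exists>b\<in>X. ends e = {a, b}"
    "\<not> has_cycle ends F"
  shows "card F < card X"
proof -
  have "card (components X ends F) > 0"
    unfolding components_eq_image using assms(1,2) by (simp add: card_gt_0_iff)
  then show ?thesis using card_forest_add_card_components_le[OF assms(1,3-5)] by linarith
qed

lemma multigraph_obtain_ends:
  assumes "multigraph V E ends" "e \<in> E"
  obtains a b where "ends e = {a, b}"
proof -
  have "card (ends e) = 1 \<or> card (ends e) = 2"
    using assms unfolding multigraph_def by fastforce
  then show ?thesis
  proof
    assume "card (ends e) = 1"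
    then show ?thesis using that by (metis card_1_singletonE insert_absorb2)
  next
    assume "card (ends e) = 2"
    then show ?thesis using that by (auto simp: card_2_iff)
  qed
qed

lemma finite_induced_edges: "multigraph V E ends \<Longrightarrow> F \<subseteq> E \<Longrightarrow> finite (induced_edges ends F Y)"
  unfolding multigraph_def induced_edges_def by (auto intro: finite_subset)

lemma card_induced_edges_forest_less:
  assumes "multigraph V E ends" "F \<subseteq> E" "\<not> has_cycle ends F" "Y \<subseteq> V" "Y \<noteq> {}"
  shows "card (induced_edges ends F Y) < card Y"
proof (rule card_forest_less_card)
  show "finite Y" using assms(1,4) unfolding multigraph_def by (meson finite_subset)
  show "\<forall>e\<in>induced_edges ends F Y. \<exists>a\<in>Y. \<exists>b\<in>Y. ends e = {a, b}"
  proof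
    fix e assume e: "e \<in> induced_edges ends F Y"
    then have "e \<in> E" "ends e \<subseteq> Y" using assms(2) unfolding induced_edges_def by auto
    then show "\<exists>a\<in>Y. \<exists>b\<in>Y. ends e = {a, b}"
      using multigraph_obtain_ends[OF assms(1)] by (metis insert_subset)
  qed
  show "\<not> has_cycle ends (induced_edges ends F Y)"
    using assms(3) has_cycle_mono[of ends _ F] unfolding induced_edges_def by blast
  show "finite (induced_edges ends F Y)" using finite_induced_edges[OF assms(1,2)] .
qed (use assms(5) in simp)

lemma card_induced_edges_two_forests_le:
  assumes "multigraph V E ends" "F \<subseteq> E" "\<not> has_cycle ends F" "T \<subseteq> E" "\<not> has_cycle ends T"
    "Y \<subseteq> V" "Y \<noteq> {}"
  shows "card (induced_edges ends (F \<union> T) Y) + 2 \<le> 2 * card Y"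
proof -
  have "induced_edges ends (F \<union> T) Y = induced_edges ends F Y \<union> induced_edges ends T Y"
    unfolding induced_edges_def by auto
  then have "card (induced_edges ends (F \<union> T) Y) \<le> card (induced_edges ends F Y) + card (induced_edges ends T Y)"
    by (simp add: card_Un_le)
  then show ?thesis
    using card_induced_edges_forest_less[OF assms(1-3,6,7)]
      card_induced_edges_forest_less[OF assms(1,4,5,6,7)] by linarith
qed

lemma saturated_Un:
  assumes "finite V" "finite E0"
    and bound: "\<And>Y. Y \<subseteq> V \<Longrightarrow> Y \<noteq> {} \<Longrightarrow> card (induced_edges ends E0 Y) + 2 \<le> 2 * card Y"
    and "saturated V ends E0 X" "saturated V ends E0 X'" "X \<inter> X' \<noteq> {}"
  shows "saturated V ends E0 (X \<union> X')"
proof -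
  let ?I = "induced_edges ends E0"
  have XV: "X \<subseteq> V" "X' \<subseteq> V" using assms(4,5) unfolding saturated_def by auto
  have sat: "int (card (?I X)) = 2 * int (card X) - 2" "int (card (?I X')) = 2 * int (card X') - 2"
    using assms(4,5) unfolding saturated_def by auto
  have "finite X" "finite X'" using XV assms(1) finite_subset by auto
  then have card_X: "card (X \<union> X') + card (X \<inter> X') = card X + card X'" by (metis card_Un_Int)
  have fin: "finite (?I Y)" for Y using assms(2) unfolding induced_edges_def by simp
  have "?I X \<inter> ?I X' = ?I (X \<inter> X')" unfolding induced_edges_def by auto
  then have card_I: "card (?I X \<union> ?I X') + card (?I (X \<inter> X')) = card (?I X) + card (?I X')"
    using card_Un_Int[OF fin fin] by simp
  have "?I X \<union> ?I X' \<subseteq> ?I (X \<union> X')" unfolding induced_edges_def by auto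
  then have "card (?I X \<union> ?I X') \<le> card (?I (X \<union> X'))" by (simp add: card_mono fin)
  moreover have "card (?I (X \<inter> X')) + 2 \<le> 2 * card (X \<inter> X')"
    using bound[of "X \<inter> X'"] XV assms(6) by blast
  moreover have "card (?I (X \<union> X')) + 2 \<le> 2 * card (X \<union> X')"
    using bound[of "X \<union> X'"] XV assms(6) by blast
  ultimately have "int (card (?I (X \<union> X'))) = 2 * int (card (X \<union> X')) - 2"
    using sat card_X card_I by linarith
  then show ?thesis using XV unfolding saturated_def by simp
qed

lemma exch_verts_obtain_forest_tree:
  assumes "p \<in> exch_verts V E ends"
  obtains F T where "F \<in> spanning_2forests V E ends" "T \<in> spanning_trees V E ends"
    "pair_edges p = F \<union> T"
  using assms unfolding exch_verts_def pair_edges_def by (auto simp: Un_commute)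

theorem lemma2p7:
  fixes V :: "'v set" and E :: "'e set" and ends :: "'e \<Rightarrow> 'v set"
  assumes "multigraph V E ends"
    and "connected_on V ends E"
    and "exch_component V E ends H0"
    and "p \<in> H0"
    and "E0 = pair_edges p"
    and "saturated_component V ends E0 X"
    and "saturated_component V ends E0 X'"
    and "X \<noteq> X'"
  shows "X \<inter> X' = {}"
proof (rule ccontr)
  assume meet: "X \<inter> X' \<noteq> {}"
  have "p \<in> exch_verts V E ends" using assms(3,4) unfolding exch_component_def by blast
  then obtain F T where "F \<in> spanning_2forests V E ends" "T \<in> spanning_trees V E ends"
    and E0: "E0 = F \<union> T"
    using assms(5) exch_verts_obtain_forest_tree by metis
  then have F: "F \<subseteq> E" "\<not> has_cycle ends F" and T: "T \<subseteq> E" "\<not> has_cycle ends T"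
    unfolding spanning_2forests_def spanning_trees_def by auto
  have "finite V" "finite E0"
    using E0 F T assms(1) unfolding multigraph_def by (auto intro: finite_subset)
  moreover note card_induced_edges_two_forests_le[OF assms(1) F T]
  ultimately have "saturated V ends E0 (X \<union> X')"
    using saturated_Un[of V E0 ends X X'] E0 meet assms(6,7)
    unfolding saturated_component_def by blast
  then have "X \<union> X' = X" "X \<union> X' = X'"
    using assms(6,7) unfolding saturated_component_def by auto
  then show False using assms(8) by simp
qed

end
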